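(* Let $X$ and $Y$ be Banach spaces, $C\in \mathcal{L}(X,Y)$, $(S_t)_{t\geq 0}$ a $C_0$-semigroup on $X$, $M \geq 1$ and $\omega \in \mathbb{R}$ such that $\lVert S_t \rVert \leq M e^{\omega t}$ for all $t \geq 0$, $\lambda^* \geq 0$, and $(P_\lambda)_{\lambda>\lambda^*}$ a family of bounded linear operators in $X$. Assume that there exist $d_0,d_1,\gamma_1 > 0$ such that \[ \forall x\in X \ \forall \lambda > \lambda^* \colon \quad \lVert P_\lambda x \rVert_{ X } \le d_0 e^{d_1 \lambda^{\gamma_1}} \lVert C P_\lambda x \rVert_{Y }, \] and that there exist $d_2\geq 1$ and $d_3,\gamma_2,\gamma_3, T>0$ with $\gamma_1<\gamma_2$ such that \[ \forall x\in X \ \forall \lambda > \lambda^* \ \forall t\in (0,T/2] \colon \quad \lVert (\mathrm{id}-P_\lambda) S_t x \rVert_{X} \le d_2 e^{-d_3 \lambda^{\gamma_2} t^{\gamma_3}} \lVert x \rVert_{X}. \] Then for all $r\in[1,\infty]$ and all $x \in X$, \[ \lVert S_T x \rVert_{X} \leq C_{\mathrm{obs}} \lVert CS_{(\cdot)}x \rVert_{L_r ((0,T);Y)} \quad\text{with}\quad C_{\mathrm{obs}} = \frac{C_1}{T^{1/r}} \exp \left(\frac{C_2}{T^{\frac{\gamma_1 \gamma_3}{\gamma_2 - \gamma_1}}} + C_3 T\right), \] where $T^{1/r} = 1$ if $r=\infty$, and \begin{align*} C_1 &= (4 M d_0) \max \Bigl\{\left( (4d_2 M^2) (d_0 \lVert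 C \rVert_{\mathcal{L} (X,Y)}+1) \right)^{8/(e \ln 2)}, e^{4d_1\left(2\lambda^*\right)^{\gamma_1}}\Bigr\}, \\ C_2 &= 4 \bigl(2^{\gamma_1} (2\cdot 4^{\gamma_3})^\frac{\gamma_1 \gamma_2}{\gamma_2-\gamma_1} d_1^{\gamma_2} / d_3^{\gamma_1} \bigr)^{\frac{1}{\gamma_2-\gamma_1}} , \\ C_3 & = \max\{\omega , 0\} \bigl(1 + 10 / (e \ln 2) \bigr). \end{align*}
   Context: $\mathcal{L}(V,W)$ denotes the space of bounded linear operators between normed spaces $V$ and $W$. For $r=\infty$ the norm $\lVert CS_{(\cdot)}x \rVert_{L_\infty((0,T);Y)}$ is $\operatorname{ess\,sup}_{\tau\in[0,T]}\lVert CS_\tau x\rVert_Y$, and for $r<\infty$ it is $(\int_0^T \lVert C S_\tau x\rVert_Y^r\,d\tau)^{1/r}$. *)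

theory Defs
  imports "HOL-Analysis.Analysis" "HOL-Probability.Probability"
begin

definition C0_semigroup :: "(real \<Rightarrow> ('a::banach \<Rightarrow>\<^sub>L 'a)) \<Rightarrow> bool" where
  "C0_semigroup S \<longleftrightarrow>
     S 0 = id_blinfun \<and>
     (\<forall>t s. 0 \<le> t \<longrightarrow> 0 \<le> s \<longrightarrow> S (t + s) = S t o\<^sub>L S s) \<and>
     (\<forall>x. ((\<lambda>t. blinfun_apply (S t) x) \<longlongrightarrow> x) (at_right 0))"

definition Lr_norm :: "ereal \<Rightarrow> real \<Rightarrow> (real \<Rightarrow> 'b::real_normed_vector) \<Rightarrow> ereal" where
  "Lr_norm r T f =
     (if r = \<infinity> then esssup (restrict_space lborel {0<..<T}) (\<lambda>t. ereal (norm (f t)))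
      else ereal ((LINT t:{0<..<T}|lborel. norm (f t) powr real_of_ereal r)
                   powr (1 / real_of_ereal r)))"

definition T_root :: "ereal \<Rightarrow> real \<Rightarrow> real" where
  "T_root r T = (if r = \<infinity> then 1 else T powr (1 / real_of_ereal r))"

end

theory Submission imports Defs begin

text \<open>
  Write f_k = \<parallel>S (T/2^k) x\<parallel>. On the dyadic interval [T/2^(k+1), T/2^k] pick a time s in the
  second half and split S s x with P \<lambda>: the spectral inequality bounds the low-frequency part
  by the observation \<parallel>C (S s x)\<parallel>, and the dissipation estimate, applied over the elapsed time
  \<ge> T/2^(k+2), makes the remainder (id - P \<lambda>) (S s x) exponentially small compared to f_(k+1).
  As s is arbitrary, the observation enters only through its infimum over an interval of length
  T/2^(k+2), which the L_r norm controls. With E_k = d1 \<lambda>_k^\<gamma>1 this gives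
    f_k \<le> A e^E_k 2^k \<parallel>C S x\<parallel>_r / T^(1/r) + e^(E_k - E_(k+1)) f_(k+1) / 4,
  provided the frequencies \<lambda>_k = \<lambda>_0 2^(k \<gamma>3/(\<gamma>2-\<gamma>1)) grow fast enough for the dissipation
  exponent to dominate E_(k+1); this is where \<gamma>1 < \<gamma>2 is needed. For u_k = e^(-E_k) f_k / 4^k
  the recursion telescopes into a geometric series, so f_0 \<le> 2 A e^E_0 \<parallel>C S x\<parallel>_r / T^(1/r),
  and the choice of \<lambda>_0 bounds e^E_0 by the constants C1, C2, C3.
\<close>

section \<open>Strong continuity of C_0-semigroups\<close>

lemma C0_semigroup_apply_add:
  assumes "C0_semigroup S" "0 \<le> t" "0 \<le> s"
  shows "S (t + s) x = S t (S s x)"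
  using assms unfolding C0_semigroup_def by simp

lemma C0_semigroup_tendsto_at_right:
  assumes sg: "C0_semigroup S" and t0: "0 \<le> t0"
  shows "((\<lambda>t. S t x) \<longlongrightarrow> S t0 x) (at_right t0)"
proof -
  have "((\<lambda>h. S t0 (S h x)) \<longlongrightarrow> S t0 x) (at_right 0)"
    using sg unfolding C0_semigroup_def by (intro blinfun.tendsto tendsto_const) blast
  moreover have "\<forall>\<^sub>F h in at_right 0. S t0 (S h x) = S (h + t0) x"
    using eventually_at_right_less[of 0]
  proof eventually_elim
    case (elim h)
    then show ?case using C0_semigroup_apply_add[OF sg t0, of h x] by (simp add: add.commute)
  qed
  ultimately have "((\<lambda>h. S (h + t0) x) \<longlongrightarrow> S t0 x) (at_right 0)"
    by (rule Lim_transform_eventually)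
  then show ?thesis by (simp add: filterlim_at_right_to_0[of _ _ t0])
qed

lemma C0_semigroup_tendsto_at_left:
  assumes sg: "C0_semigroup S" and t0: "0 < t0" and bound: "\<And>t. t \<in> {0..t0} \<Longrightarrow> norm (S t) \<le> K"
  shows "((\<lambda>t. S t x) \<longlongrightarrow> S t0 x) (at_left t0)"
proof -
  have "((\<lambda>h. S h x) \<longlongrightarrow> x) (at_right 0)" using sg unfolding C0_semigroup_def by blast
  then have "((\<lambda>h. x - S h x) \<longlongrightarrow> x - x) (at_right 0)" by (intro tendsto_diff tendsto_const)
  then have "((\<lambda>h. x - S h x) \<longlongrightarrow> 0) (at_right 0)" by simp
  moreover have "\<forall>\<^sub>F h in at_right 0. norm (S (t0 - h) x - S t0 x) \<le> norm (x - S h x) * K"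
  proof -
    have "\<forall>\<^sub>F h in at_right 0. 0 < h \<and> h < t0"
      using t0 by (auto simp: eventually_at_right_field)
    then show ?thesis
    proof eventually_elim
      case (elim h)
      then have "S t0 x = S (t0 - h) (S h x)"
        using C0_semigroup_apply_add[OF sg, of "t0 - h" h] by simp
      then have "norm (S (t0 - h) x - S t0 x) = norm (S (t0 - h) (x - S h x))"
        by (simp add: blinfun.diff_right)
      also have "\<dots> \<le> norm (S (t0 - h)) * norm (x - S h x)" by (rule norm_blinfun)
      also have "\<dots> \<le> K * norm (x - S h x)" using elim by (intro mult_right_mono bound) auto
      also have "\<dots> = norm (x - S h x) * K" by (rule mult.commute)
      finally show ?case .
    qed
  qed
  ultimately have "((\<lambda>h. S (t0 - h) x - S t0 x) \<longlongrightarrow> 0) (at_right 0)"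
    by (rule tendsto_0_le)
  then have "((\<lambda>h. S (t0 - h) x) \<longlongrightarrow> S t0 x) (at_right 0)"
    using Lim_null by blast
  then show ?thesis
    by (simp add: filterlim_at_left_to_right filterlim_at_right_to_0[of _ _ "-t0"])
qed

lemma C0_semigroup_continuous_on:
  assumes sg: "C0_semigroup S" and growth: "\<forall>t\<ge>0. norm (S t) \<le> M * exp (\<omega> * t)"
  shows "continuous_on {0..T} (\<lambda>t. S t x)"
proof (cases "0 < T")
  case True
  have bound: "norm (S t) \<le> M * exp (\<bar>\<omega>\<bar> * t0)" if "t \<in> {0..t0}" for t t0
  proof -
    have "0 \<le> M" using growth[rule_format, of 0] by (simp add: order_trans[OF norm_ge_zero])
    moreover have "\<omega> * t \<le> \<bar>\<omega>\<bar> * t0"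
    proof -
      have "\<omega> * t \<le> \<bar>\<omega>\<bar> * t" using that by (intro mult_right_mono) auto
      also have "\<dots> \<le> \<bar>\<omega>\<bar> * t0" using that by (intro mult_left_mono) auto
      finally show ?thesis .
    qed
    ultimately have "M * exp (\<omega> * t) \<le> M * exp (\<bar>\<omega>\<bar> * t0)" by (simp add: mult_left_mono)
    moreover have "norm (S t) \<le> M * exp (\<omega> * t)" using growth that by simp
    ultimately show ?thesis by linarith
  qed
  have left: "((\<lambda>t. S t x) \<longlongrightarrow> S t0 x) (at_left t0)" if "0 < t0" for t0
    using C0_semigroup_tendsto_at_left[OF sg that bound] .
  show ?thesis
  proof (rule continuous_on_IccI)
    fix t :: real assume "0 < t" "t < T"
    then show "((\<lambda>t. S t x) \<longlongrightarrow> S t x) (at t)"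
      unfolding filterlim_at_split using left C0_semigroup_tendsto_at_right[OF sg] by simp
  qed (use True left C0_semigroup_tendsto_at_right[OF sg] in auto)
qed (auto intro: continuous_on_subset[OF continuous_on_sing[of 0]])

section \<open>Lower bounds for the L_r norm on (0,T)\<close>

lemma esssup_restrict_ge_interval:
  fixes f :: "real \<Rightarrow> ereal"
  assumes ab: "\<alpha> < \<beta>" "{\<alpha><..<\<beta>} \<subseteq> A" and A: "A \<in> sets lborel"
    and c: "\<forall>s\<in>{\<alpha><..<\<beta>}. c \<le> f s"
  shows "c \<le> esssup (restrict_space lborel A) f"
proof (rule ccontr)
  let ?e = "esssup (restrict_space lborel A) f"
  assume less: "\<not> c \<le> ?e"
  have "AE s in restrict_space lborel A. f s \<le> ?e" by (rule esssup_AE)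
  then have "AE s in lborel. s \<in> A \<longrightarrow> f s \<le> ?e"
    using A by (simp add: AE_restrict_space_iff)
  then have "AE s in lborel. s \<notin> {\<alpha><..<\<beta>}"
  proof eventually_elim
    case (elim s)
    show ?case
    proof
      assume s: "s \<in> {\<alpha><..<\<beta>}"
      then have "c \<le> ?e" using elim ab c order_trans by blast
      with less show False ..
    qed
  qed
  then have "{\<alpha><..<\<beta>} \<in> null_sets lborel"
    by (subst AE_iff_null_sets) auto
  then show False using ab by (simp add: null_sets_def)
qed

lemma set_integral_ge_interval:
  fixes h :: "real \<Rightarrow> real"
  assumes cont: "continuous_on {0..T} h" and nonneg: "\<And>t. 0 \<le> h t"
    and ab: "0 \<le> \<alpha>" "\<alpha> < \<beta>" "\<beta> \<le> T" and c: "\<forall>s\<in>{\<alpha><..<\<beta>}. c \<le> h s"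
  shows "(\<beta> - \<alpha>) * c \<le> (LINT t:{0<..<T}|lborel. h t)"
proof -
  have "set_integrable lborel {0..T} h"
    unfolding set_integrable_def by (rule borel_integrable_compact[OF compact_Icc cont])
  then have int: "set_integrable lborel {\<alpha><..<\<beta>} h" "set_integrable lborel {0<..<T} h"
    using ab by (auto elim!: set_integrable_subset)
  have "(\<beta> - \<alpha>) * c = (LINT t:{\<alpha><..<\<beta>}|lborel. c)"
    using ab by (simp add: set_integral_const)
  also have "\<dots> \<le> (LINT t:{\<alpha><..<\<beta>}|lborel. h t)"
    using ab c int by (intro set_integral_mono) (auto simp: set_integrable_def)
  also have "\<dots> \<le> (LINT t:{0<..<T}|lborel. h t)"
    unfolding set_lebesgue_integral_def
  proof (rule integral_mono)
    show "integrable lborel (\<lambda>t. indicator {\<alpha><..<\<beta>} t *\<^sub>R h t)"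
      "integrable lborel (\<lambda>t. indicator {0<..<T} t *\<^sub>R h t)"
      using int unfolding set_integrable_def by auto
  qed (use ab nonneg in \<open>auto split: split_indicator\<close>)
  finally show ?thesis .
qed

lemma T_root_pos: "0 < h \<Longrightarrow> 0 < T_root r h"
  by (simp add: T_root_def)

lemma T_root_div_ge:
  assumes r: "1 \<le> r" and h: "0 < h" and m: "1 \<le> m"
  shows "T_root r h / m \<le> T_root r (h / m)"
proof (cases "r = \<infinity>")
  case True
  then show ?thesis using m by (simp add: T_root_def)
next
  case False
  with r obtain \<rho> where \<rho>: "r = ereal \<rho>" "1 \<le> \<rho>" by (cases r) auto
  have "m powr (1 / \<rho>) \<le> m powr 1" using m \<rho> by (intro powr_mono) auto
  then have "h powr (1 / \<rho>) / m \<le> h powr (1 / \<rho>) / m powr (1 / \<rho>)"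
    using m by (intro divide_left_mono) auto
  then show ?thesis using \<rho> h m by (simp add: T_root_def powr_divide)
qed

lemma Lr_norm_ge_interval:
  fixes g :: "real \<Rightarrow> 'b::real_normed_vector"
  assumes r: "1 \<le> r" and cont: "continuous_on {0..T} g"
    and ab: "0 \<le> \<alpha>" "\<alpha> < \<beta>" "\<beta> \<le> T" and V: "\<forall>s\<in>{\<alpha><..<\<beta>}. V \<le> norm (g s)"
  shows "ereal (T_root r (\<beta> - \<alpha>) * V) \<le> Lr_norm r T g"
proof (cases "r = \<infinity>")
  case True
  have "ereal V \<le> esssup (restrict_space lborel {0<..<T}) (\<lambda>t. ereal (norm (g t)))"
    using ab V by (intro esssup_restrict_ge_interval) auto
  then show ?thesis using True by (simp add: T_root_def Lr_norm_def)
next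
  case False
  with r obtain \<rho> where \<rho>: "r = ereal \<rho>" "1 \<le> \<rho>" by (cases r) auto
  let ?I = "LINT t:{0<..<T}|lborel. norm (g t) powr \<rho>"
  have Lr: "Lr_norm r T g = ereal (?I powr (1 / \<rho>))"
    using \<rho> by (simp add: Lr_norm_def)
  show ?thesis
  proof (cases "V \<le> 0")
    case True
    then have "T_root r (\<beta> - \<alpha>) * V \<le> 0"
      using T_root_pos[of "\<beta> - \<alpha>" r] ab by (simp add: mult_nonneg_nonpos)
    then show ?thesis unfolding Lr by (simp add: order_trans[OF _ powr_ge_zero])
  next
    case False
    have "(\<beta> - \<alpha>) * V powr \<rho> \<le> ?I"
      using ab V False \<rho> by (intro set_integral_ge_interval continuous_on_powr' continuous_intros cont)
        (auto intro: powr_mono2)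
    then have "((\<beta> - \<alpha>) * V powr \<rho>) powr (1 / \<rho>) \<le> ?I powr (1 / \<rho>)"
      using ab False \<rho> by (intro powr_mono2) auto
    moreover have "((\<beta> - \<alpha>) * V powr \<rho>) powr (1 / \<rho>) = T_root r (\<beta> - \<alpha>) * V"
      using ab False \<rho> by (simp add: T_root_def powr_mult powr_powr)
    ultimately show ?thesis unfolding Lr by simp
  qed
qed

lemma Lr_norm_nonneg:
  assumes "1 \<le> r" "continuous_on {0..T} g" "0 < T"
  shows "0 \<le> Lr_norm r T g"
  using Lr_norm_ge_interval[OF assms(1,2), of 0 T 0] assms by (simp add: zero_ereal_def)

section \<open>The iteration over dyadic intervals\<close>

lemma le_suminf_of_telescoping:
  fixes u a :: "nat \<Rightarrow> real"
  assumes step: "\<And>k. u k \<le> a k + u (Suc k)" and a: "summable a" and u: "u \<longlonglongrightarrow> 0"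
  shows "u 0 \<le> suminf a"
proof -
  have partial: "u 0 \<le> (\<Sum>k<n. a k) + u n" for n
    by (induction n) (use step in \<open>auto intro: order_trans\<close>)
  have "(\<lambda>n. (\<Sum>k<n. a k) + u n) \<longlonglongrightarrow> suminf a + 0"
    by (intro tendsto_add summable_LIMSEQ a u)
  then show ?thesis using partial by (auto intro: LIMSEQ_le_const)
qed

lemma geometric_iteration_bound:
  fixes f E :: "nat \<Rightarrow> real"
  assumes step: "\<And>k. f k \<le> A * exp (E k) * 2^k * Q + (1/4) * exp (E k - E (Suc k)) * f (Suc k)"
    and f: "\<And>k. 0 \<le> f k" "\<And>k. f k \<le> F" and E: "\<And>k. E 0 \<le> E k"
  shows "f 0 \<le> 2 * A * exp (E 0) * Q"
proof -
  define u where "u k = exp (- E k) * f k / 4^k" for k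
  have "u k \<le> A * Q * (1/2)^k + u (Suc k)" for k
  proof -
    have "u k \<le> exp (- E k) / 4^k * (A * exp (E k) * 2^k * Q + (1/4) * exp (E k - E (Suc k)) * f (Suc k))"
      unfolding u_def using mult_left_mono[OF step[of k], of "exp (- E k) / 4^k"] by simp
    also have "\<dots> = A * Q * (2^k / 4^k) * (exp (- E k) * exp (E k))
         + exp (- E k) * exp (E k - E (Suc k)) * f (Suc k) / 4^(Suc k)"
      by (simp add: field_simps)
    also have "\<dots> = A * Q * (1/2)^k + u (Suc k)"
      by (simp add: u_def power_divide[symmetric] flip: exp_add)
    finally show ?thesis .
  qed
  moreover have "u \<longlonglongrightarrow> 0"
  proof (rule tendsto_sandwich[of "\<lambda>_. 0"])
    show "\<forall>\<^sub>F n in sequentially. 0 \<le> u n" using f by (simp add: u_def)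
    show "\<forall>\<^sub>F n in sequentially. u n \<le> exp (- E 0) * F * (1/4)^n"
    proof (intro always_eventually allI)
      fix n
      have "exp (- E n) * f n \<le> exp (- E 0) * F" using E f by (intro mult_mono) auto
      then show "u n \<le> exp (- E 0) * F * (1/4)^n"
        unfolding u_def by (simp add: power_one_over divide_right_mono)
    qed
    show "(\<lambda>n. exp (- E 0) * F * (1/4::real)^n) \<longlonglongrightarrow> 0"
      by (intro tendsto_mult_right_zero LIMSEQ_power_zero) simp
  qed simp
  moreover have "(\<lambda>k. A * Q * (1/2::real)^k) sums (A * Q * 2)"
    using geometric_sums[of "1/2::real"] by (intro sums_mult) simp
  ultimately have "u 0 \<le> A * Q * 2"
    using le_suminf_of_telescoping by (metis sums_summable sums_unique)
  then have "exp (E 0) * u 0 \<le> exp (E 0) * (A * Q * 2)" by simp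
  then show ?thesis unfolding u_def by (simp add: mult_ac flip: exp_add)
qed

lemma double_mul_exp_le_max:
  fixes D a :: real
  assumes D: "4 \<le> D" and a: "0 \<le> a"
  shows "2 * D * exp a \<le> max (D powr (8 / (exp 1 * ln 2))) (exp (4 * a))"
proof -
  define c :: real where "c = 8 / (exp 1 * ln 2)"
  have "exp 1 * ln 2 \<le> (3::real) * 1" using exp_le ln_2_less_1 by (intro mult_mono) auto
  then have c: "2 \<le> c" unfolding c_def by (simp add: field_simps)
  have "ln 4 \<le> ln D" using D by simp
  then have lnD: "2 * ln 2 \<le> ln D" using ln_realpow[of 2 2] by simp
  have ln2: "0 < ln (2::real)" by simp
  have cD: "2 * ln D \<le> c * ln D" using c lnD ln2 by (intro mult_right_mono; linarith)
  have "ln 2 + ln D + a \<le> max (c * ln D) (4 * a)"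
  proof (cases "4 * a \<le> c * ln D")
    case True
    with cD lnD ln2 have "ln 2 + ln D + a \<le> c * ln D" by linarith
    then show ?thesis by simp
  next
    case False
    with cD lnD ln2 have "ln 2 + ln D + a \<le> 4 * a" by linarith
    then show ?thesis by simp
  qed
  then have "exp (ln 2 + ln D + a) \<le> exp (max (c * ln D) (4 * a))" by simp
  also have "exp (ln 2 + ln D + a) = 2 * D * exp a" using D by (simp add: exp_add)
  also have "exp (max (c * ln D) (4 * a)) = max (D powr c) (exp (4 * a))"
    using D by (simp add: powr_def max_def mult.commute)
  finally show ?thesis unfolding c_def .
qed

section \<open>The constants and the frequency sequence\<close>

definition obs_C1 :: "real \<Rightarrow> real \<Rightarrow> real \<Rightarrow> real \<Rightarrow> real \<Rightarrow> real \<Rightarrow> real \<Rightarrow> real" where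
  "obs_C1 M d0 d2 c d1 \<gamma>1 lams =
     (4 * M * d0) * max (((4 * d2 * M\<^sup>2) * (d0 * c + 1)) powr (8 / (exp 1 * ln 2)))
                        (exp (4 * d1 * (2 * lams) powr \<gamma>1))"

definition obs_C2 :: "real \<Rightarrow> real \<Rightarrow> real \<Rightarrow> real \<Rightarrow> real \<Rightarrow> real" where
  "obs_C2 d1 d3 \<gamma>1 \<gamma>2 \<gamma>3 = 4 * (2 powr \<gamma>1 * (2 * 4 powr \<gamma>3) powr (\<gamma>1 * \<gamma>2 / (\<gamma>2 - \<gamma>1))
                   * d1 powr \<gamma>2 / d3 powr \<gamma>1) powr (1 / (\<gamma>2 - \<gamma>1))"

definition obs_C3 :: "real \<Rightarrow> real" where
  "obs_C3 \<omega> = max \<omega> 0 * (1 + 10 / (exp 1 * ln 2))"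

text \<open>The frequency \<lambda> at which the decay exponent d3 \<lambda>^\<gamma>2 (T/4)^\<gamma>3 on the first dyadic interval
  equals 2 d1 (2^(\<gamma>3/(\<gamma>2-\<gamma>1)) \<lambda>)^\<gamma>1, twice the cost of observing at the next frequency; along
  \<lambda>_k = \<lambda>_0 2^(k \<gamma>3/(\<gamma>2-\<gamma>1)) the same balance holds on every dyadic interval.\<close>
definition dissipation_threshold :: "real \<Rightarrow> real \<Rightarrow> real \<Rightarrow> real \<Rightarrow> real \<Rightarrow> real \<Rightarrow> real" where
  "dissipation_threshold d1 d3 \<gamma>1 \<gamma>2 \<gamma>3 T =
     exp ((ln 2 + \<gamma>1 * \<gamma>3 * ln 2 / (\<gamma>2 - \<gamma>1) + ln d1 - ln d3 - \<gamma>3 * ln (T / 4)) / (\<gamma>2 - \<gamma>1))"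

lemma ln_div_two_power: "0 < T \<Longrightarrow> ln (T / 2 ^ n) = ln T - real n * ln 2"
  by (simp add: ln_div ln_realpow)

lemma dyadic_dissipation_dominates:
  fixes \<gamma>1 \<gamma>2 \<gamma>3 d1 d3 T lam0 :: real
  assumes pos: "0 < \<gamma>1" "\<gamma>1 < \<gamma>2" "0 < d1" "0 < d3" "0 < T"
    and lam0: "dissipation_threshold d1 d3 \<gamma>1 \<gamma>2 \<gamma>3 T \<le> lam0"
  shows "2 * d1 * (lam0 * 2 powr (real (Suc k) * \<gamma>3 / (\<gamma>2 - \<gamma>1))) powr \<gamma>1
         \<le> d3 * (lam0 * 2 powr (real k * \<gamma>3 / (\<gamma>2 - \<gamma>1))) powr \<gamma>2 * (T / 2^(k+2)) powr \<gamma>3"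
proof -
  define l where "l = ln (2::real)"
  define \<delta> where "\<delta> = \<gamma>2 - \<gamma>1"
  define l0 where "l0 = ln lam0"
  have \<delta>: "0 < \<delta>" "\<gamma>2 = \<gamma>1 + \<delta>" using pos unfolding \<delta>_def by auto
  have "0 < lam0" using lam0 unfolding dissipation_threshold_def by (meson exp_gt_zero order_less_le_trans)
  then have lam_exp: "lam0 * 2 powr (real j * \<gamma>3 / \<delta>) = exp (l0 + real j * \<gamma>3 * l / \<delta>)" for j
    by (simp add: l0_def l_def powr_def exp_add)
  have "(l + \<gamma>1 * \<gamma>3 * l / \<delta> + ln d1 - ln d3 - \<gamma>3 * ln (T / 4)) / \<delta> \<le> l0"
    using lam0 \<open>0 < lam0\<close> by (simp add: l0_def ln_ge_iff dissipation_threshold_def l_def \<delta>_def)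
  then have l0: "l + \<gamma>1 * \<gamma>3 * l / \<delta> + ln d1 - ln d3 - \<gamma>3 * ln (T / 4) \<le> \<delta> * l0"
    using \<delta> by (simp add: field_simps)
  have lhs: "2 * d1 * exp (l0 + real (Suc k) * \<gamma>3 * l / \<delta>) powr \<gamma>1
      = exp (l + ln d1 + \<gamma>1 * (l0 + real (Suc k) * \<gamma>3 * l / \<delta>))"
    using pos unfolding exp_powr_real by (simp add: exp_add l_def mult.commute)
  have "ln (T / 2^(k+2)) = ln T - real (k+2) * l"
    unfolding l_def by (rule ln_div_two_power[OF pos(5)])
  then have "(T / 2^(k+2)) powr \<gamma>3 = exp (\<gamma>3 * (ln T - real (k+2) * l))"
    unfolding powr_def using pos by (simp add: mult.commute)
  then have rhs: "d3 * exp (l0 + real k * \<gamma>3 * l / \<delta>) powr \<gamma>2 * (T / 2^(k+2)) powr \<gamma>3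
      = exp (ln d3 + \<gamma>2 * (l0 + real k * \<gamma>3 * l / \<delta>) + \<gamma>3 * (ln T - real (k+2) * l))"
    using pos unfolding exp_powr_real by (simp add: exp_add mult.commute)
  have lnT4: "ln (T / 4) = ln T - 2 * l"
    using ln_div_two_power[OF pos(5), of 2] by (simp add: l_def)
  have "(ln d3 + \<gamma>2 * (l0 + real k * \<gamma>3 * l / \<delta>) + \<gamma>3 * (ln T - real (k+2) * l))
      - (l + ln d1 + \<gamma>1 * (l0 + real (Suc k) * \<gamma>3 * l / \<delta>))
      = \<delta> * l0 - (l + \<gamma>1 * \<gamma>3 * l / \<delta> + ln d1 - ln d3 - \<gamma>3 * (ln T - 2 * l))"
    using \<delta> by (simp add: field_simps)
  then have "l + ln d1 + \<gamma>1 * (l0 + real (Suc k) * \<gamma>3 * l / \<delta>)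
      \<le> ln d3 + \<gamma>2 * (l0 + real k * \<gamma>3 * l / \<delta>) + \<gamma>3 * (ln T - real (k+2) * l)"
    using l0 unfolding lnT4 by linarith
  then show ?thesis unfolding \<delta>_def[symmetric] lam_exp lhs rhs by simp
qed

lemma threshold_le_obs_C2:
  fixes \<gamma>1 \<gamma>2 \<gamma>3 d1 d3 T :: real
  assumes pos: "0 < \<gamma>1" "\<gamma>1 < \<gamma>2" "0 < \<gamma>3" "0 < d1" "0 < d3" "0 < T"
  shows "d1 * dissipation_threshold d1 d3 \<gamma>1 \<gamma>2 \<gamma>3 T powr \<gamma>1
    \<le> obs_C2 d1 d3 \<gamma>1 \<gamma>2 \<gamma>3 / T powr (\<gamma>1 * \<gamma>3 / (\<gamma>2 - \<gamma>1))"
proof -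
  define l where "l = ln (2::real)"
  define \<delta> where "\<delta> = \<gamma>2 - \<gamma>1"
  have \<delta>: "0 < \<delta>" "\<gamma>2 = \<gamma>1 + \<delta>" using pos unfolding \<delta>_def by auto
  have l4: "ln (4::real) = 2 * l" using ln_realpow[of 2 2] by (simp add: l_def)
  define X1 where "X1 = ln d1 + \<gamma>1 * ((l + \<gamma>1 * \<gamma>3 * l / \<delta> + ln d1 - ln d3 - \<gamma>3 * (ln T - 2 * l)) / \<delta>)"
  define B where "B = \<gamma>1 * l + (\<gamma>1 * \<gamma>2 / \<delta>) * (l + \<gamma>3 * (2 * l)) + \<gamma>2 * ln d1 - \<gamma>1 * ln d3"
  define X2 where "X2 = 2 * l + B / \<delta> - (\<gamma>1 * \<gamma>3 / \<delta>) * ln T"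
  have lhs: "d1 * dissipation_threshold d1 d3 \<gamma>1 \<gamma>2 \<gamma>3 T powr \<gamma>1 = exp X1"
    using pos l4 unfolding dissipation_threshold_def exp_powr_real
    by (simp add: X1_def exp_add ln_div l_def \<delta>_def mult.commute)
  have "2 powr \<gamma>1 * (2 * 4 powr \<gamma>3) powr (\<gamma>1 * \<gamma>2 / \<delta>) * d1 powr \<gamma>2 / d3 powr \<gamma>1 = exp B"
  proof -
    have "2 * 4 powr \<gamma>3 = exp (l + \<gamma>3 * (2 * l))" using l4 by (simp add: powr_def exp_add l_def)
    then have "(2 * 4 powr \<gamma>3) powr (\<gamma>1 * \<gamma>2 / \<delta>) = exp ((\<gamma>1 * \<gamma>2 / \<delta>) * (l + \<gamma>3 * (2 * l)))"
      by (simp add: exp_powr_real mult.commute)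
    then show ?thesis
      using pos by (simp add: B_def powr_def exp_add exp_diff l_def mult.commute)
  qed
  then have rhs: "obs_C2 d1 d3 \<gamma>1 \<gamma>2 \<gamma>3 / T powr (\<gamma>1 * \<gamma>3 / \<delta>) = exp X2"
    using pos l4 by (simp add: obs_C2_def X2_def exp_powr_real powr_def exp_add exp_diff l_def
        flip: \<delta>_def) (metis exp_ln zero_less_numeral)
  have "X2 - X1 = l * (2 + \<gamma>1 * \<gamma>2 / \<delta>^2 + \<gamma>1^2 * \<gamma>3 / \<delta>^2)"
    unfolding X1_def X2_def B_def \<delta>(2) using \<delta> by (simp add: field_simps power2_eq_square)
  moreover have "0 < l * (2 + \<gamma>1 * \<gamma>2 / \<delta>^2 + \<gamma>1^2 * \<gamma>3 / \<delta>^2)"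
    using pos \<delta> by (simp add: l_def add_pos_nonneg)
  ultimately show ?thesis unfolding lhs rhs[unfolded \<delta>_def] by simp
qed

lemma max3_powr_le_sum:
  fixes a b c g :: real
  assumes "0 \<le> a" "0 \<le> b" "0 \<le> c" "0 < g"
  shows "max a (max b c) powr g \<le> a powr g + b powr g + c powr g"
  using assms by (simp add: max_def add_increasing add_increasing2)

lemma frequency_sequence:
  fixes \<gamma>1 \<gamma>2 \<gamma>3 d1 d3 T lams L :: real
  assumes pos: "0 < \<gamma>1" "\<gamma>1 < \<gamma>2" "0 < \<gamma>3" "0 < d1" "0 < d3" "0 < T"
    and lams: "0 \<le> lams" and L: "0 < L"
  obtains lam :: "nat \<Rightarrow> real" where
    "\<And>k. lams < lam k"
    "\<And>k. d1 * lam 0 powr \<gamma>1 \<le> d1 * lam k powr \<gamma>1"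
    "\<And>k. d1 * lam (Suc k) powr \<gamma>1 + L \<le> d3 * lam k powr \<gamma>2 * (T / 2^(k+2)) powr \<gamma>3"
    "d1 * lam 0 powr \<gamma>1
       \<le> obs_C2 d1 d3 \<gamma>1 \<gamma>2 \<gamma>3 / T powr (\<gamma>1 * \<gamma>3 / (\<gamma>2 - \<gamma>1)) + L + d1 * (2 * lams) powr \<gamma>1"
proof -
  define a where "a = dissipation_threshold d1 d3 \<gamma>1 \<gamma>2 \<gamma>3 T"
  define b where "b = (L / d1) powr (1 / \<gamma>1)"
  define lam0 where "lam0 = max a (max b (2 * lams))"
  define lam where "lam k = lam0 * 2 powr (real k * \<gamma>3 / (\<gamma>2 - \<gamma>1))" for k
  have ab: "0 < a" "0 < b" using pos L by (auto simp: a_def b_def dissipation_threshold_def)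
  then have lam0: "0 < lam0" "a \<le> lam0" "b \<le> lam0" "2 * lams \<le> lam0"
    unfolding lam0_def by auto
  have lam_ge: "lam0 \<le> lam k" for k
    using lam0 pos ge_one_powr_ge_zero[of 2 "real k * \<gamma>3 / (\<gamma>2 - \<gamma>1)"] by (simp add: lam_def)
  have E_mono: "d1 * lam 0 powr \<gamma>1 \<le> d1 * lam k powr \<gamma>1" for k
    using lam_ge lam0 pos by (simp add: lam_def powr_mono2)
  have b_pow: "d1 * b powr \<gamma>1 = L" using pos L by (simp add: b_def powr_powr)
  have "L \<le> d1 * lam 0 powr \<gamma>1"
    unfolding b_pow[symmetric] using ab lam0 pos by (simp add: lam_def powr_mono2)
  then have L_le: "L \<le> d1 * lam (Suc k) powr \<gamma>1" for k
    using E_mono[of "Suc k"] by linarith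
  show ?thesis
  proof
    show "lams < lam k" for k using lam_ge[of k] lam0 lams by linarith
    show "d1 * lam 0 powr \<gamma>1 \<le> d1 * lam k powr \<gamma>1" for k by (rule E_mono)
    show "d1 * lam (Suc k) powr \<gamma>1 + L \<le> d3 * lam k powr \<gamma>2 * (T / 2^(k+2)) powr \<gamma>3" for k
      using dyadic_dissipation_dominates[OF pos(1,2,4,5,6) lam0(2)[unfolded a_def], of k] L_le[of k]
      by (simp add: lam_def)
    have "d1 * lam 0 powr \<gamma>1 \<le> d1 * a powr \<gamma>1 + d1 * b powr \<gamma>1 + d1 * (2 * lams) powr \<gamma>1"
      using max3_powr_le_sum[of a b "2 * lams" \<gamma>1] ab lams pos
      by (simp add: lam_def lam0_def distrib_left[symmetric])
    then show "d1 * lam 0 powr \<gamma>1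
       \<le> obs_C2 d1 d3 \<gamma>1 \<gamma>2 \<gamma>3 / T powr (\<gamma>1 * \<gamma>3 / (\<gamma>2 - \<gamma>1)) + L + d1 * (2 * lams) powr \<gamma>1"
      using threshold_le_obs_C2[OF pos] b_pow by (simp add: a_def)
  qed
qed

lemma obs_C3_ge: "5/4 * max \<omega> 0 \<le> obs_C3 \<omega>"
proof -
  have "exp 1 * ln 2 \<le> (3::real) * 1" using exp_le ln_2_less_1 by (intro mult_mono) auto
  then have "5/4 \<le> 1 + 10 / (exp 1 * ln (2::real))" by (simp add: field_simps)
  then have "max \<omega> 0 * (5/4) \<le> max \<omega> 0 * (1 + 10 / (exp 1 * ln 2))" by (rule mult_left_mono) simp
  then show ?thesis unfolding obs_C3_def by (simp add: mult.commute)
qed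

locale semigroup_observability =
  fixes S :: "real \<Rightarrow> ('a::banach \<Rightarrow>\<^sub>L 'a)"
    and C :: "'a \<Rightarrow>\<^sub>L 'b::banach"
    and P :: "real \<Rightarrow> ('a \<Rightarrow>\<^sub>L 'a)"
    and M \<omega> lams d0 d1 \<gamma>1 d2 d3 \<gamma>2 \<gamma>3 T :: real
  assumes semigroup: "C0_semigroup S"
    and M_ge: "M \<ge> 1"
    and growth: "\<forall>t\<ge>0. norm (S t) \<le> M * exp (\<omega> * t)"
    and lam_nonneg: "lams \<ge> 0"
    and pos1: "d0 > 0" "d1 > 0" "\<gamma>1 > 0"
    and spectral: "\<forall>x. \<forall>lam>lams.
        norm (P lam x) \<le> d0 * exp (d1 * lam powr \<gamma>1) * norm (C (P lam x))"
    and pos2: "d2 \<ge> 1" "d3 > 0" "\<gamma>2 > 0" "\<gamma>3 > 0" "T > 0"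
    and gam_lt: "\<gamma>1 < \<gamma>2"
    and dissip: "\<forall>x. \<forall>lam>lams. \<forall>t\<in>{0<..T/2}.
        norm (S t x - P lam (S t x)) \<le> d2 * exp (- d3 * lam powr \<gamma>2 * t powr \<gamma>3) * norm x"
begin

definition D :: real where "D = (4 * d2 * M\<^sup>2) * (d0 * norm C + 1)"

lemma D_ge: "4 \<le> D"
proof -
  have "1 \<le> d2 * M\<^sup>2" using M_ge pos2(1) by (metis mult_mono' mult_1_left one_le_power zero_le_one)
  moreover have "1 \<le> d0 * norm C + 1" using pos1 by simp
  ultimately have "1 \<le> (d2 * M\<^sup>2) * (d0 * norm C + 1)" by (metis mult_mono' mult_1_left zero_le_one)
  then show ?thesis unfolding D_def by simp
qed

lemma norm_S_apply_le:
  assumes "0 \<le> t" "t \<le> u"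
  shows "norm (S t z) \<le> M * exp (max \<omega> 0 * u) * norm z"
proof -
  have "\<omega> * t \<le> max \<omega> 0 * u"
    using assms by (intro order_trans[OF mult_right_mono mult_left_mono]) auto
  then have "norm (S t) \<le> M * exp (max \<omega> 0 * u)"
    using growth assms M_ge by (smt (verit) exp_le_cancel_iff mult_left_mono)
  then show ?thesis by (meson norm_blinfun norm_ge_zero mult_right_mono order_trans)
qed

lemma norm_le_observation_plus_remainder:
  assumes lam: "lams < lam"
  shows "norm y \<le> d0 * exp (d1 * lam powr \<gamma>1) * norm (C y)
           + (d0 * norm C + 1) * exp (d1 * lam powr \<gamma>1) * norm (y - P lam y)"
proof -
  define E where "E = exp (d1 * lam powr \<gamma>1)"
  define R where "R = norm (y - P lam y)"
  have E: "1 \<le> E" using pos1 by (simp add: E_def)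
  have "norm (C (P lam y)) \<le> norm (C y) + norm C * R"
    using norm_triangle_ineq4[of "C y" "C (y - P lam y)"] norm_blinfun[of C "y - P lam y"]
    by (simp add: R_def blinfun.diff_right)
  then have "norm (P lam y) \<le> d0 * E * (norm (C y) + norm C * R)"
    using spectral lam pos1 unfolding E_def by (smt (verit) mult_left_mono exp_gt_zero mult_pos_pos)
  moreover have "norm y \<le> norm (P lam y) + R"
    using norm_triangle_ineq[of "P lam y" "y - P lam y"] by (simp add: R_def)
  moreover have "R \<le> E * R" using E mult_right_mono[of 1 E R] by (simp add: R_def)
  ultimately show ?thesis unfolding E_def[symmetric] R_def[symmetric] by (simp add: algebra_simps)
qed

lemma norm_S_le_observation_plus_past:
  assumes ab: "0 \<le> a" "a < b" "b \<le> T" and lam: "lams < lam"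
    and s: "a + (b - a) / 2 < s" "s < b"
  shows "norm (S b x) \<le> M * d0 * exp (max \<omega> 0 * ((b - a) / 2)) * exp (d1 * lam powr \<gamma>1) * norm (C (S s x))
     + M\<^sup>2 * d2 * (d0 * norm C + 1) * exp (max \<omega> 0 * (b - a))
        * exp (d1 * lam powr \<gamma>1 - d3 * lam powr \<gamma>2 * ((b - a) / 2) powr \<gamma>3) * norm (S a x)"
proof -
  define \<tau> where "\<tau> = b - a"
  define W where "W = M * exp (max \<omega> 0 * (\<tau> / 2))"
  define E where "E = d1 * lam powr \<gamma>1"
  define G where "G = d3 * lam powr \<gamma>2 * (\<tau> / 2) powr \<gamma>3"
  define y where "y = S s x"
  define z where "z = S (s - a - \<tau> / 2) (S a x)"
  have W: "0 \<le> W" using M_ge by (simp add: W_def)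
  have s_bounds: "0 \<le> s" "0 \<le> b - s" "b - s \<le> \<tau> / 2" "0 \<le> s - a - \<tau> / 2" "s - a - \<tau> / 2 \<le> \<tau> / 2"
    using ab s by (simp_all add: \<tau>_def field_simps)
  then have "S b x = S (b - s) y"
    using C0_semigroup_apply_add[OF semigroup, of "b - s" s x] by (simp add: y_def)
  then have Sb: "norm (S b x) \<le> W * norm y"
    using norm_S_apply_le[OF s_bounds(2,3)] by (simp add: W_def)
  have "y = S (\<tau> / 2) z"
    using C0_semigroup_apply_add[OF semigroup, of "\<tau> / 2" "s - a - \<tau> / 2 + a" x]
      C0_semigroup_apply_add[OF semigroup, of "s - a - \<tau> / 2" a x] s_bounds ab
    by (simp add: y_def z_def \<tau>_def)
  then have "norm (y - P lam y) \<le> d2 * exp (- G) * norm z"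
    using dissip lam ab by (simp add: G_def \<tau>_def)
  also have "\<dots> \<le> d2 * exp (- G) * (W * norm (S a x))"
    using norm_S_apply_le[OF s_bounds(4,5)] pos2(1) by (intro mult_left_mono) (auto simp: z_def W_def)
  finally have remainder: "norm (y - P lam y) \<le> d2 * exp (- G) * (W * norm (S a x))" .
  have "norm y \<le> d0 * exp E * norm (C y) + (d0 * norm C + 1) * exp E * norm (y - P lam y)"
    using norm_le_observation_plus_remainder[OF lam] by (simp add: E_def)
  also have "\<dots> \<le> d0 * exp E * norm (C y) + (d0 * norm C + 1) * exp E * (d2 * exp (- G) * (W * norm (S a x)))"
    using remainder pos1 by (intro add_left_mono mult_left_mono) auto
  finally have "norm (S b x) \<le> W * (d0 * exp E * norm (C y)
      + (d0 * norm C + 1) * exp E * (d2 * exp (- G) * (W * norm (S a x))))"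
    using Sb W by (meson mult_left_mono order_trans)
  also have "\<dots> = M * d0 * exp (max \<omega> 0 * (\<tau> / 2)) * exp E * norm (C y)
      + M\<^sup>2 * d2 * (d0 * norm C + 1) * exp (max \<omega> 0 * \<tau>) * exp (E - G) * norm (S a x)"
  proof -
    have "exp (max \<omega> 0 * \<tau>) = exp (max \<omega> 0 * (\<tau> / 2)) * exp (max \<omega> 0 * (\<tau> / 2))"
      by (simp flip: exp_add)
    then show ?thesis by (simp add: W_def exp_diff exp_minus field_simps power2_eq_square)
  qed
  finally show ?thesis by (simp add: \<tau>_def E_def G_def y_def)
qed

lemma observation_continuous: "continuous_on {0..T} (\<lambda>t. C (S t x))"
  by (intro blinfun.continuous_on continuous_on_const C0_semigroup_continuous_on[OF semigroup growth])

lemma norm_S_le_Lr_plus_past: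
  assumes r: "1 \<le> r" and Q: "Lr_norm r T (\<lambda>t. C (S t x)) = ereal Q"
    and ab: "0 \<le> a" "a < b" "b \<le> T" and lam: "lams < lam"
  shows "norm (S b x) \<le> M * d0 * exp (max \<omega> 0 * ((b - a) / 2)) * exp (d1 * lam powr \<gamma>1)
        * (Q / T_root r ((b - a) / 2))
     + M\<^sup>2 * d2 * (d0 * norm C + 1) * exp (max \<omega> 0 * (b - a))
        * exp (d1 * lam powr \<gamma>1 - d3 * lam powr \<gamma>2 * ((b - a) / 2) powr \<gamma>3) * norm (S a x)"
    (is "_ \<le> ?K1 * _ + ?K2 * _")
proof -
  define V where "V = (norm (S b x) - ?K2 * norm (S a x)) / ?K1"
  have K1: "0 < ?K1" using M_ge pos1 by simp
  have root: "0 < T_root r ((b - a) / 2)" using ab by (simp add: T_root_pos)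
  have "\<forall>s\<in>{a + (b - a) / 2<..<b}. V \<le> norm (C (S s x))"
    using norm_S_le_observation_plus_past[OF ab lam] K1 by (auto simp: V_def field_simps)
  then have "ereal (T_root r (b - (a + (b - a) / 2)) * V) \<le> ereal Q"
    unfolding Q[symmetric] using ab
    by (intro Lr_norm_ge_interval r observation_continuous) (auto simp: field_simps)
  then have "V \<le> Q / T_root r ((b - a) / 2)"
    using root by (simp add: field_simps)
  then show ?thesis using K1 by (simp add: V_def field_simps)
qed

lemma dyadic_step:
  assumes r: "1 \<le> r" and Q: "Lr_norm r T (\<lambda>t. C (S t x)) = ereal Q" and lam: "lams < lam"
  shows "norm (S (T / 2^k) x)
    \<le> 4 * M * d0 * exp (max \<omega> 0 * T / 4) * exp (d1 * lam powr \<gamma>1) * 2^k * (Q / T_root r T)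
      + D * exp (max \<omega> 0 * T) / 4
        * exp (d1 * lam powr \<gamma>1 - d3 * lam powr \<gamma>2 * (T / 2^(k+2)) powr \<gamma>3) * norm (S (T / 2^Suc k) x)"
proof -
  define E where "E = exp (d1 * lam powr \<gamma>1)"
  define R where "R = exp (d1 * lam powr \<gamma>1 - d3 * lam powr \<gamma>2 * (T / 2^(k+2)) powr \<gamma>3)"
  have T: "0 < T" using pos2 by simp
  have half: "(T / 2^k - T / 2^Suc k) / 2 = T / 2^(k+2)" "T / 2^k - T / 2^Suc k = T / 2^Suc k"
    by (simp_all add: field_simps)
  have Q0: "0 \<le> Q" using Lr_norm_nonneg[OF r observation_continuous T, of x] Q by simp
  have step: "norm (S (T / 2^k) x) \<le> M * d0 * exp (max \<omega> 0 * (T / 2^(k+2))) * E * (Q / T_root r (T / 2^(k+2)))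
      + M\<^sup>2 * d2 * (d0 * norm C + 1) * exp (max \<omega> 0 * (T / 2^Suc k)) * R * norm (S (T / 2^Suc k) x)"
    using norm_S_le_Lr_plus_past[OF r Q _ _ _ lam, of "T / 2^Suc k" "T / 2^k"] T
    by (simp add: half E_def R_def field_simps)
  have "M * d0 * exp (max \<omega> 0 * (T / 2^(k+2))) * E * (Q / T_root r (T / 2^(k+2)))
      \<le> M * d0 * exp (max \<omega> 0 * T / 4) * E * (2^(k+2) * (Q / T_root r T))"
  proof (intro mult_mono)
    have "T / 2^(k+2) \<le> T / 4" using T by (simp add: field_simps power_add)
    then have "max \<omega> 0 * (T / 2^(k+2)) \<le> max \<omega> 0 * (T / 4)" by (rule mult_left_mono) simp
    then show "exp (max \<omega> 0 * (T / 2^(k+2))) \<le> exp (max \<omega> 0 * T / 4)" by simp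
    have "T_root r T / 2^(k+2) \<le> T_root r (T / 2^(k+2))"
      by (rule T_root_div_ge[OF r T], rule one_le_power) simp
    then have "Q / T_root r (T / 2^(k+2)) \<le> Q / (T_root r T / 2^(k+2))"
      using Q0 T_root_pos[OF T, of r] by (intro divide_left_mono) (auto simp: T_root_pos T)
    then show "Q / T_root r (T / 2^(k+2)) \<le> 2^(k+2) * (Q / T_root r T)" by (simp add: mult.commute)
  qed (use M_ge pos1 Q0 T in \<open>auto simp: E_def T_root_pos less_imp_le\<close>)
  also have "\<dots> = 4 * M * d0 * exp (max \<omega> 0 * T / 4) * E * 2^k * (Q / T_root r T)"
    by (simp add: power_add)
  finally have first: "M * d0 * exp (max \<omega> 0 * (T / 2^(k+2))) * E * (Q / T_root r (T / 2^(k+2)))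
      \<le> 4 * M * d0 * exp (max \<omega> 0 * T / 4) * E * 2^k * (Q / T_root r T)" .
  have "T / 2^Suc k \<le> T"
    using T mult_left_mono[OF one_le_power[of "2::real" "Suc k"], of T] by (simp add: field_simps)
  then have "max \<omega> 0 * (T / 2^Suc k) \<le> max \<omega> 0 * T" by (rule mult_left_mono) simp
  then have "M\<^sup>2 * d2 * (d0 * norm C + 1) * exp (max \<omega> 0 * (T / 2^Suc k))
      \<le> D * exp (max \<omega> 0 * T) / 4"
    using M_ge pos1 pos2 by (simp add: D_def mult_left_mono)
  then have second: "M\<^sup>2 * d2 * (d0 * norm C + 1) * exp (max \<omega> 0 * (T / 2^Suc k)) * R
        * norm (S (T / 2^Suc k) x)
      \<le> D * exp (max \<omega> 0 * T) / 4 * R * norm (S (T / 2^Suc k) x)"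
    by (intro mult_right_mono) (auto simp: R_def)
  from step first second show ?thesis unfolding E_def R_def by linarith
qed

lemma prefactor_le_constants:
  assumes E0: "E0 \<le> obs_C2 d1 d3 \<gamma>1 \<gamma>2 \<gamma>3 / T powr (\<gamma>1 * \<gamma>3 / (\<gamma>2 - \<gamma>1))
      + (ln D + max \<omega> 0 * T) + d1 * (2 * lams) powr \<gamma>1"
  shows "8 * M * d0 * exp (max \<omega> 0 * T / 4) * exp E0
    \<le> obs_C1 M d0 d2 (norm C) d1 \<gamma>1 lams
       * exp (obs_C2 d1 d3 \<gamma>1 \<gamma>2 \<gamma>3 / T powr (\<gamma>1 * \<gamma>3 / (\<gamma>2 - \<gamma>1)) + obs_C3 \<omega> * T)"
proof -
  define c2 where "c2 = obs_C2 d1 d3 \<gamma>1 \<gamma>2 \<gamma>3 / T powr (\<gamma>1 * \<gamma>3 / (\<gamma>2 - \<gamma>1))"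
  define a where "a = d1 * (2 * lams) powr \<gamma>1"
  have D: "0 < D" using D_ge by simp
  have "exp E0 \<le> exp (c2 + (ln D + max \<omega> 0 * T) + a)" using E0 by (simp add: c2_def a_def)
  then have "8 * M * d0 * exp (max \<omega> 0 * T / 4) * exp E0
      \<le> 8 * M * d0 * exp (max \<omega> 0 * T / 4) * exp (c2 + (ln D + max \<omega> 0 * T) + a)"
    using M_ge pos1 by (intro mult_left_mono) auto
  also have "\<dots> = (4 * M * d0) * (2 * D * exp a) * exp (c2 + 5/4 * max \<omega> 0 * T)"
  proof -
    have "max \<omega> 0 * T / 4 + (c2 + (ln D + max \<omega> 0 * T) + a) = (c2 + 5/4 * max \<omega> 0 * T) + a + ln D"
      by simp
    then have "exp (max \<omega> 0 * T / 4) * exp (c2 + (ln D + max \<omega> 0 * T) + a)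
        = exp (c2 + 5/4 * max \<omega> 0 * T) * exp a * D"
      using D by (simp only: exp_add[symmetric]) (simp add: exp_add)
    then show ?thesis by (simp add: mult_ac)
  qed
  also have "\<dots> \<le> (4 * M * d0) * max (D powr (8 / (exp 1 * ln 2))) (exp (4 * a)) * exp (c2 + obs_C3 \<omega> * T)"
  proof (intro mult_mono mult_left_mono)
    show "2 * D * exp a \<le> max (D powr (8 / (exp 1 * ln 2))) (exp (4 * a))"
      using D_ge pos1 by (intro double_mul_exp_le_max) (auto simp: a_def)
    show "exp (c2 + 5/4 * max \<omega> 0 * T) \<le> exp (c2 + obs_C3 \<omega> * T)"
      using obs_C3_ge[of \<omega>] pos2(5) by (simp add: mult_right_mono)
  qed (use M_ge pos1 D in \<open>auto simp: le_max_iff_disj\<close>)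
  finally show ?thesis by (simp add: obs_C1_def D_def a_def c2_def mult.assoc)
qed

lemma dyadic_recursion:
  assumes r: "1 \<le> r" and Q: "Lr_norm r T (\<lambda>t. C (S t x)) = ereal Q" and lam: "lams < lam"
    and dissipates: "d1 * lam' powr \<gamma>1 + (ln D + max \<omega> 0 * T) \<le> d3 * lam powr \<gamma>2 * (T / 2^(k+2)) powr \<gamma>3"
  shows "norm (S (T / 2^k) x)
    \<le> 4 * M * d0 * exp (max \<omega> 0 * T / 4) * exp (d1 * lam powr \<gamma>1) * 2^k * (Q / T_root r T)
      + 1/4 * exp (d1 * lam powr \<gamma>1 - d1 * lam' powr \<gamma>1) * norm (S (T / 2^Suc k) x)"
proof -
  have "exp (d1 * lam powr \<gamma>1 - d3 * lam powr \<gamma>2 * (T / 2^(k+2)) powr \<gamma>3)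
      \<le> exp (d1 * lam powr \<gamma>1 - d1 * lam' powr \<gamma>1) * exp (- (ln D + max \<omega> 0 * T))"
    using dissipates by (simp flip: exp_add)
  also have "exp (- (ln D + max \<omega> 0 * T)) = 1 / (D * exp (max \<omega> 0 * T))"
    unfolding exp_minus using D_ge by (simp add: exp_add inverse_eq_divide)
  finally have "D * exp (max \<omega> 0 * T) / 4 * exp (d1 * lam powr \<gamma>1 - d3 * lam powr \<gamma>2 * (T / 2^(k+2)) powr \<gamma>3)
      \<le> 1/4 * exp (d1 * lam powr \<gamma>1 - d1 * lam' powr \<gamma>1)"
    using D_ge by (simp add: field_simps)
  then have "D * exp (max \<omega> 0 * T) / 4 * exp (d1 * lam powr \<gamma>1 - d3 * lam powr \<gamma>2 * (T / 2^(k+2)) powr \<gamma>3)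
        * norm (S (T / 2^Suc k) x)
      \<le> 1/4 * exp (d1 * lam powr \<gamma>1 - d1 * lam' powr \<gamma>1) * norm (S (T / 2^Suc k) x)"
    by (rule mult_right_mono) simp
  with dyadic_step[OF r Q lam, of k] show ?thesis by linarith
qed

lemma norm_S_T_le:
  assumes r: "1 \<le> r" and Q: "Lr_norm r T (\<lambda>t. C (S t x)) = ereal Q"
  shows "norm (S T x) \<le> obs_C1 M d0 d2 (norm C) d1 \<gamma>1 lams / T_root r T
      * exp (obs_C2 d1 d3 \<gamma>1 \<gamma>2 \<gamma>3 / T powr (\<gamma>1 * \<gamma>3 / (\<gamma>2 - \<gamma>1)) + obs_C3 \<omega> * T) * Q"
proof -
  have "0 < ln D + max \<omega> 0 * T" using D_ge pos2(5) by (simp add: add_pos_nonneg)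
  then obtain lam where lam: "\<And>k. lams < lam k"
    "\<And>k. d1 * lam 0 powr \<gamma>1 \<le> d1 * lam k powr \<gamma>1"
    "\<And>k. d1 * lam (Suc k) powr \<gamma>1 + (ln D + max \<omega> 0 * T) \<le> d3 * lam k powr \<gamma>2 * (T / 2^(k+2)) powr \<gamma>3"
    "d1 * lam 0 powr \<gamma>1 \<le> obs_C2 d1 d3 \<gamma>1 \<gamma>2 \<gamma>3 / T powr (\<gamma>1 * \<gamma>3 / (\<gamma>2 - \<gamma>1))
       + (ln D + max \<omega> 0 * T) + d1 * (2 * lams) powr \<gamma>1"
    using frequency_sequence[OF pos1(3) gam_lt pos2(4) pos1(2) pos2(2) pos2(5) lam_nonneg] by blast
  define E where "E k = d1 * lam k powr \<gamma>1" for k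
  define A where "A = 4 * M * d0 * exp (max \<omega> 0 * T / 4)"
  define Q' where "Q' = Q / T_root r T"
  have "norm (S (T / 2^0) x) \<le> 2 * A * exp (E 0) * Q'"
  proof (rule geometric_iteration_bound)
    show "norm (S (T / 2^k) x)
        \<le> A * exp (E k) * 2^k * Q' + 1/4 * exp (E k - E (Suc k)) * norm (S (T / 2^Suc k) x)" for k
      using dyadic_recursion[OF r Q lam(1) lam(3)] by (simp add: E_def A_def Q'_def)
    show "norm (S (T / 2^k) x) \<le> M * exp (max \<omega> 0 * T) * norm x" for k
      using pos2(5) by (intro norm_S_apply_le)
        (auto simp: field_simps intro: order_trans[OF _ mult_left_mono[OF one_le_power]])
    show "E 0 \<le> E k" for k using lam(2) by (simp add: E_def)
  qed simp
  also have "\<dots> \<le> obs_C1 M d0 d2 (norm C) d1 \<gamma>1 lams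
      * exp (obs_C2 d1 d3 \<gamma>1 \<gamma>2 \<gamma>3 / T powr (\<gamma>1 * \<gamma>3 / (\<gamma>2 - \<gamma>1)) + obs_C3 \<omega> * T) * Q'"
  proof (rule mult_right_mono)
    show "2 * A * exp (E 0) \<le> obs_C1 M d0 d2 (norm C) d1 \<gamma>1 lams
        * exp (obs_C2 d1 d3 \<gamma>1 \<gamma>2 \<gamma>3 / T powr (\<gamma>1 * \<gamma>3 / (\<gamma>2 - \<gamma>1)) + obs_C3 \<omega> * T)"
      using prefactor_le_constants[OF lam(4)] by (simp add: A_def E_def)
    show "0 \<le> Q'"
      using Lr_norm_nonneg[OF r observation_continuous pos2(5), of x] Q T_root_pos[OF pos2(5), of r]
      by (simp add: Q'_def)
  qed
  finally show ?thesis by (simp add: Q'_def)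
qed

lemma observability_estimate:
  assumes r: "1 \<le> r"
  shows "ereal (norm (S T x)) \<le> ereal (obs_C1 M d0 d2 (norm C) d1 \<gamma>1 lams / T_root r T
      * exp (obs_C2 d1 d3 \<gamma>1 \<gamma>2 \<gamma>3 / T powr (\<gamma>1 * \<gamma>3 / (\<gamma>2 - \<gamma>1)) + obs_C3 \<omega> * T))
    * Lr_norm r T (\<lambda>t. C (S t x))"
proof (cases "Lr_norm r T (\<lambda>t. C (S t x))")
  case (real Q)
  then show ?thesis using norm_S_T_le[OF r real] by simp
next
  case PInf
  have "0 < obs_C1 M d0 d2 (norm C) d1 \<gamma>1 lams" using M_ge pos1 by (simp add: obs_C1_def less_max_iff_disj)
  then show ?thesis using PInf T_root_pos[OF pos2(5), of r] by simp
next
  case MInf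
  then show ?thesis using Lr_norm_nonneg[OF r observation_continuous pos2(5), of x] by simp
qed

end

theorem theorem2p1:
  fixes S :: "real \<Rightarrow> ('a::banach \<Rightarrow>\<^sub>L 'a)"
    and C :: "'a \<Rightarrow>\<^sub>L 'b::banach"
    and P :: "real \<Rightarrow> ('a \<Rightarrow>\<^sub>L 'a)"
    and M \<omega> lams d0 d1 \<gamma>1 d2 d3 \<gamma>2 \<gamma>3 T :: real
  assumes semigroup: "C0_semigroup S"
    and M_ge: "M \<ge> 1"
    and growth: "\<forall>t\<ge>0. norm (S t) \<le> M * exp (\<omega> * t)"
    and lam_nonneg: "lams \<ge> 0"
    and pos1: "d0 > 0" "d1 > 0" "\<gamma>1 > 0"
    and spectral: "\<forall>x. \<forall>lam>lams.
        norm (P lam x) \<le> d0 * exp (d1 * lam powr \<gamma>1) * norm (C (P lam x))"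
    and pos2: "d2 \<ge> 1" "d3 > 0" "\<gamma>2 > 0" "\<gamma>3 > 0" "T > 0"
    and gam_lt: "\<gamma>1 < \<gamma>2"
    and dissip: "\<forall>x. \<forall>lam>lams. \<forall>t\<in>{0<..T/2}.
        norm (S t x - P lam (S t x)) \<le> d2 * exp (- d3 * lam powr \<gamma>2 * t powr \<gamma>3) * norm x"
  shows "\<forall>r::ereal. 1 \<le> r \<longrightarrow> (\<forall>x.
     let C1 = (4 * M * d0) * max (((4 * d2 * M\<^sup>2) * (d0 * norm C + 1)) powr (8 / (exp 1 * ln 2)))
                                 (exp (4 * d1 * (2 * lams) powr \<gamma>1));
         C2 = 4 * (2 powr \<gamma>1 * (2 * 4 powr \<gamma>3) powr (\<gamma>1 * \<gamma>2 / (\<gamma>2 - \<gamma>1))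
                   * d1 powr \<gamma>2 / d3 powr \<gamma>1) powr (1 / (\<gamma>2 - \<gamma>1));
         C3 = max \<omega> 0 * (1 + 10 / (exp 1 * ln 2));
         Cobs = C1 / T_root r T * exp (C2 / T powr (\<gamma>1 * \<gamma>3 / (\<gamma>2 - \<gamma>1)) + C3 * T)
     in ereal (norm (S T x)) \<le> ereal Cobs * Lr_norm r T (\<lambda>t. C (S t x)))"
proof -
  interpret semigroup_observability S C P M \<omega> lams d0 d1 \<gamma>1 d2 d3 \<gamma>2 \<gamma>3 T
    by unfold_locales (use assms in auto)
  show ?thesis
    using observability_estimate unfolding Let_def obs_C1_def obs_C2_def obs_C3_def by blast
qed

end
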